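(* On a Klein bottle with a flat metric, two distinct closed geodesics without self-intersections cannot intersect in exactly three points. *)

theory Defs
  imports Main "HOL.Real"
begin

text \<open>Flat Klein bottle model: the plane modulo the group generated by the
glide reflection (x,y) -> (x + a, -y) and the translation (x,y) -> (x, y + b),
with a, b > 0.  Its elements are exactly the maps
(x,y) -> (x + m a, (-1)^m y + n b) for integers m, n.
Every flat Klein bottle is isometric to one of these.\<close>

definition kb_rel :: "real \<Rightarrow> real \<Rightarrow> real \<times> real \<Rightarrow> real \<times> real \<Rightarrow> bool" where
  "kb_rel a b P Q \<longleftrightarrow>
     (\<exists>m n :: int. fst Q = fst P + of_int m * a \<and>
        snd Q = (if even m then snd P else - snd P) + of_int n * b)"

definition kb_pt :: "real \<Rightarrow> real \<Rightarrow> real \<times> real \<Rightarrow> (real \<times> real) set" where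
  "kb_pt a b P = {Q. kb_rel a b P Q}"

definition line :: "real \<times> real \<Rightarrow> real \<times> real \<Rightarrow> real \<Rightarrow> real \<times> real" where
  "line P V t = (fst P + t * fst V, snd P + t * snd V)"

definition simple_closed_geodesic ::
  "real \<Rightarrow> real \<Rightarrow> real \<times> real \<Rightarrow> real \<times> real \<Rightarrow> real \<Rightarrow> bool" where
  "simple_closed_geodesic a b P V L \<longleftrightarrow>
     V \<noteq> (0, 0) \<and> L > 0 \<and>
     (\<forall>t. kb_pt a b (line P V (t + L)) = kb_pt a b (line P V t)) \<and>
     (\<forall>s\<in>{0..<L}. \<forall>t\<in>{0..<L}.
        kb_pt a b (line P V s) = kb_pt a b (line P V t) \<longrightarrow> s = t)"

definition geodesic_image :: "real \<Rightarrow> real \<Rightarrow> real \<times> real \<Rightarrow> real \<times> real \<Rightarrow> (real \<times> real) set set" where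
  "geodesic_image a b P V = range (\<lambda>t. kb_pt a b (line P V t))"

end

theory Submission
  imports Defs
begin

text \<open>A simple closed geodesic must be vertical or horizontal: an oblique line closes up only
after an even number of glides (an odd number would pin its ordinate modulo \<open>b / 2\<close>), and
then a single glide already identifies two distinct parameters within one period. The image of a vertical line is a circle
determined by its abscissa modulo \<open>a\<close>, that of a horizontal line one determined by its ordinate
up to sign modulo \<open>b\<close>. So two distinct vertical (or two distinct horizontal) images are
disjoint, and a vertical and a horizontal image meet in at most the two points
\<open>[(c, d)]\<close> and \<open>[(c, -d)]\<close>.\<close>

lemma kb_relI:
  assumes "fst Q = fst P + of_int m * a"
    and "snd Q = (if even m then snd P else - snd P) + of_int n * b"
  shows "kb_rel a b P Q"
  using assms unfolding kb_rel_def by blast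

lemma kb_rel_refl: "kb_rel a b P P"
  by (rule kb_relI[where m = 0 and n = 0]) simp_all

lemma kb_rel_sym:
  assumes "kb_rel a b P Q"
  shows "kb_rel a b Q P"
proof -
  obtain m n :: int where Q: "fst Q = fst P + of_int m * a"
    "snd Q = (if even m then snd P else - snd P) + of_int n * b"
    using assms unfolding kb_rel_def by blast
  show ?thesis
    by (rule kb_relI[where m = "- m" and n = "if even m then - n else n"]) (use Q in auto)
qed

lemma kb_rel_trans:
  assumes "kb_rel a b P Q" and "kb_rel a b Q R"
  shows "kb_rel a b P R"
proof -
  obtain m n :: int where Q: "fst Q = fst P + of_int m * a"
    "snd Q = (if even m then snd P else - snd P) + of_int n * b"
    using assms(1) unfolding kb_rel_def by blast
  obtain m' n' :: int where R: "fst R = fst Q + of_int m' * a"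
    "snd R = (if even m' then snd Q else - snd Q) + of_int n' * b"
    using assms(2) unfolding kb_rel_def by blast
  show ?thesis
    by (rule kb_relI[where m = "m + m'" and n = "if even m' then n + n' else n' - n"])
       (use Q R in \<open>auto simp: algebra_simps\<close>)
qed

lemma kb_pt_eq_iff: "kb_pt a b P = kb_pt a b Q \<longleftrightarrow> kb_rel a b P Q"
  unfolding kb_pt_def using kb_rel_refl kb_rel_sym kb_rel_trans by blast


definition vertical_image :: "real \<Rightarrow> real \<Rightarrow> real \<Rightarrow> (real \<times> real) set set" where
  "vertical_image a b c = range (\<lambda>y. kb_pt a b (c, y))"

definition horizontal_image :: "real \<Rightarrow> real \<Rightarrow> real \<Rightarrow> (real \<times> real) set set" where
  "horizontal_image a b d = range (\<lambda>x. kb_pt a b (x, d))"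

lemma geodesic_image_vertical:
  assumes "fst V = 0" and "snd V \<noteq> 0"
  shows "geodesic_image a b P V = vertical_image a b (fst P)"
  unfolding geodesic_image_def vertical_image_def
proof (intro equalityI image_subsetI)
  show "kb_pt a b (line P V t) \<in> range (\<lambda>y. kb_pt a b (fst P, y))" for t
    using assms(1) by (simp add: line_def)
  show "kb_pt a b (fst P, y) \<in> range (\<lambda>t. kb_pt a b (line P V t))" for y
  proof
    show "kb_pt a b (fst P, y) = kb_pt a b (line P V ((y - snd P) / snd V))"
      using assms by (simp add: line_def)
  qed simp
qed

lemma geodesic_image_horizontal:
  assumes "snd V = 0" and "fst V \<noteq> 0"
  shows "geodesic_image a b P V = horizontal_image a b (snd P)"
  unfolding geodesic_image_def horizontal_image_def
proof (intro equalityI image_subsetI)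
  show "kb_pt a b (line P V t) \<in> range (\<lambda>x. kb_pt a b (x, snd P))" for t
    using assms(1) by (simp add: line_def)
  show "kb_pt a b (x, snd P) \<in> range (\<lambda>t. kb_pt a b (line P V t))" for x
  proof
    show "kb_pt a b (x, snd P) = kb_pt a b (line P V ((x - fst P) / fst V))"
      using assms by (simp add: line_def)
  qed simp
qed

lemma vertical_image_subset:
  assumes "vertical_image a b c \<inter> vertical_image a b c' \<noteq> {}"
  shows "vertical_image a b c \<subseteq> vertical_image a b c'"
proof -
  obtain y y' where "kb_rel a b (c, y) (c', y')"
    using assms unfolding vertical_image_def by (auto simp: kb_pt_eq_iff)
  then obtain m :: int where c': "c' = c + of_int m * a"
    unfolding kb_rel_def by auto
  have "kb_pt a b (c, y) = kb_pt a b (c', if even m then y else - y)" for y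
    unfolding kb_pt_eq_iff by (rule kb_relI[where m = m and n = 0]) (simp_all add: c')
  then show ?thesis
    unfolding vertical_image_def by blast
qed

lemma horizontal_image_subset:
  assumes "horizontal_image a b d \<inter> horizontal_image a b d' \<noteq> {}"
  shows "horizontal_image a b d \<subseteq> horizontal_image a b d'"
proof -
  obtain x x' where "kb_rel a b (x, d) (x', d')"
    using assms unfolding horizontal_image_def by (auto simp: kb_pt_eq_iff)
  then obtain m n :: int where d': "d' = (if even m then d else - d) + of_int n * b"
    unfolding kb_rel_def by (metis snd_conv)
  have "kb_pt a b (x, d) = kb_pt a b (x + of_int m * a, d')" for x
    unfolding kb_pt_eq_iff by (rule kb_relI[where m = m and n = n]) (simp_all add: d')
  then show ?thesis
    unfolding horizontal_image_def by blast
qed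

lemma vertical_images_disjoint:
  "vertical_image a b c \<noteq> vertical_image a b c' \<Longrightarrow>
    vertical_image a b c \<inter> vertical_image a b c' = {}"
  by (metis Int_commute subset_antisym vertical_image_subset)

lemma horizontal_images_disjoint:
  "horizontal_image a b d \<noteq> horizontal_image a b d' \<Longrightarrow>
    horizontal_image a b d \<inter> horizontal_image a b d' = {}"
  by (metis Int_commute subset_antisym horizontal_image_subset)

lemma vertical_inter_horizontal:
  "vertical_image a b c \<inter> horizontal_image a b d \<subseteq> {kb_pt a b (c, d), kb_pt a b (c, - d)}"
proof
  fix z assume "z \<in> vertical_image a b c \<inter> horizontal_image a b d"
  then obtain x y where z: "z = kb_pt a b (c, y)" and "kb_pt a b (x, d) = z"
    unfolding vertical_image_def horizontal_image_def by blast
  then have "kb_rel a b (x, d) (c, y)"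
    by (simp add: kb_pt_eq_iff)
  then obtain m n :: int where y: "y = (if even m then d else - d) + of_int n * b"
    unfolding kb_rel_def by (metis snd_conv)
  have "z = kb_pt a b (c, if even m then d else - d)"
    unfolding z kb_pt_eq_iff by (rule kb_rel_sym, rule kb_relI[where m = 0 and n = n]) (simp_all add: y)
  then show "z \<in> {kb_pt a b (c, d), kb_pt a b (c, - d)}"
    by auto
qed

lemma card_vertical_inter_horizontal:
  "card (vertical_image a b c \<inter> horizontal_image a b d) \<le> 2"
proof -
  have "card (vertical_image a b c \<inter> horizontal_image a b d)
      \<le> card {kb_pt a b (c, d), kb_pt a b (c, - d)}"
    by (rule card_mono) (simp_all add: vertical_inter_horizontal)
  also have "\<dots> \<le> 2"
    by (simp add: card_insert_if)
  finally show ?thesis .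
qed


lemma ex_int_multiple_in_interval:
  fixes c w h :: real
  assumes "h > 0"
  shows "\<exists>k::int. c \<le> w + of_int k * h \<and> w + of_int k * h < c + h"
proof
  define k where "k = \<lceil>(c - w) / h\<rceil>"
  have "(c - w) / h \<le> of_int k" and "of_int k < (c - w) / h + 1"
    unfolding k_def by linarith+
  then show "c \<le> w + of_int k * h \<and> w + of_int k * h < c + h"
    using assms by (simp add: field_simps)
qed

lemma closed_geodesic_period:
  assumes a: "a > 0" and b: "b > 0" and g: "simple_closed_geodesic a b P V L"
    and "snd V \<noteq> 0"
  shows "\<exists>m n :: int. even m \<and> L * fst V = of_int m * a \<and> L * snd V = of_int n * b"
proof -
  have closing: "\<exists>m n :: int. L * fst V = of_int m * a \<and>
      snd P + (t + L) * snd V =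
        (if even m then snd P + t * snd V else - (snd P + t * snd V)) + of_int n * b" for t
  proof -
    have "kb_rel a b (line P V t) (line P V (t + L))"
      using g unfolding simple_closed_geodesic_def by (metis kb_pt_eq_iff)
    then obtain m n :: int where
      "fst (line P V (t + L)) = fst (line P V t) + of_int m * a"
      "snd (line P V (t + L)) =
        (if even m then snd (line P V t) else - snd (line P V t)) + of_int n * b"
      unfolding kb_rel_def by blast
    then show ?thesis
      by (intro exI[of _ m] exI[of _ n]) (simp add: line_def algebra_simps)
  qed
  obtain m n :: int where m: "L * fst V = of_int m * a"
    and n: "snd P + L * snd V = (if even m then snd P else - snd P) + of_int n * b"
    using closing[of 0] by (simp only: add_0 mult_zero_left add_0_right) blast
  have "even m"
  proof (rule ccontr)
    assume "odd m"
    define t where "t = b / (4 * snd V)"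
    obtain m' n' :: int where m': "L * fst V = of_int m' * a"
      and n': "snd P + (t + L) * snd V =
        (if even m' then snd P + t * snd V else - (snd P + t * snd V)) + of_int n' * b"
      using closing[of t] by blast
    have "m' = m"
      using m m' a by simp
    \<comment> \<open>an odd glide reflects the ordinate, so shifting by \<open>t\<close> costs \<open>2 t snd V = b / 2\<close>\<close>
    then have "b / 2 = of_int (n' - n) * b"
      using n n' \<open>odd m\<close> \<open>snd V \<noteq> 0\<close> by (simp add: t_def algebra_simps)
    then have "(of_int (2 * (n' - n)) - 1) * b = 0"
      by (simp add: field_simps)
    then have "of_int (2 * (n' - n)) = (1 :: real)"
      using b by simp
    then have "2 * (n' - n) = 1"
      by (simp only: of_int_eq_1_iff)
    then show False
      by presburger
  qed
  with m n show ?thesis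
    by auto
qed

lemma oblique_line_self_intersects:
  assumes a: "a > 0" and b: "b > 0" and "fst V \<noteq> 0" and "snd V \<noteq> 0"
    and long_x: "2 * a \<le> L * \<bar>fst V\<bar>" and long_y: "b \<le> L * \<bar>snd V\<bar>"
  shows "\<exists>s\<in>{0..<L}. \<exists>t\<in>{0..<L}. s \<noteq> t \<and> kb_rel a b (line P V t) (line P V s)"
proof -
  define d where "d = a / \<bar>fst V\<bar>"
  define h where "h = b / \<bar>snd V\<bar>"
  have "d > 0" and "2 * d \<le> L"
    using a long_x \<open>fst V \<noteq> 0\<close> by (simp_all add: d_def field_simps)
  have "h > 0" and "h \<le> L"
    using b long_y \<open>snd V \<noteq> 0\<close> by (simp_all add: h_def field_simps)
  obtain k :: int where k: "d \<le> - 2 * snd P / snd V + of_int k * h"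
    "- 2 * snd P / snd V + of_int k * h < d + h"
    using ex_int_multiple_in_interval[OF \<open>h > 0\<close>] by blast
  define u where "u = - 2 * snd P / snd V + of_int k * h"
  define m :: int where "m = (if fst V > 0 then 1 else - 1)"
  define n :: int where "n = (if snd V > 0 then k else - k)"
  \<comment> \<open>\<open>s - t = d\<close> realises one glide in the abscissa; \<open>s + t = u\<close> matches the reflected ordinates\<close>
  have glide: "d * fst V = of_int m * a"
    using \<open>fst V \<noteq> 0\<close> by (auto simp: d_def m_def field_simps)
  have "of_int k * h * snd V = of_int n * b"
    using \<open>snd V \<noteq> 0\<close> by (auto simp: h_def n_def field_simps)
  then have reflect: "u * snd V = of_int n * b - 2 * snd P"
    using \<open>snd V \<noteq> 0\<close> by (simp add: u_def field_simps)
  define t where "t = (u - d) / 2"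
  define s where "s = (u + d) / 2"
  have "kb_rel a b (line P V t) (line P V s)"
  proof (rule kb_relI[where m = m and n = n])
    show "fst (line P V s) = fst (line P V t) + of_int m * a"
      using glide by (simp add: line_def s_def t_def field_simps)
    show "snd (line P V s) =
        (if even m then snd (line P V t) else - snd (line P V t)) + of_int n * b"
      using reflect by (simp add: line_def s_def t_def m_def field_simps)
  qed
  moreover have "s \<in> {0..<L}" and "t \<in> {0..<L}" and "s \<noteq> t"
    using k \<open>d > 0\<close> \<open>2 * d \<le> L\<close> \<open>h \<le> L\<close> by (simp_all add: s_def t_def u_def)
  ultimately show ?thesis
    by blast
qed

lemma simple_closed_geodesic_axis_parallel:
  assumes a: "a > 0" and b: "b > 0" and g: "simple_closed_geodesic a b P V L"
  shows "fst V = 0 \<or> snd V = 0"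
proof (rule ccontr)
  assume "\<not> (fst V = 0 \<or> snd V = 0)"
  then have "fst V \<noteq> 0" and "snd V \<noteq> 0"
    by auto
  have "L > 0"
    using g unfolding simple_closed_geodesic_def by blast
  obtain m n :: int where "even m" and m: "L * fst V = of_int m * a" and n: "L * snd V = of_int n * b"
    using closed_geodesic_period[OF a b g \<open>snd V \<noteq> 0\<close>] by blast
  have "m \<noteq> 0" and "n \<noteq> 0"
    using m n \<open>L > 0\<close> \<open>fst V \<noteq> 0\<close> \<open>snd V \<noteq> 0\<close> by auto
  with \<open>even m\<close> have "\<bar>m\<bar> \<ge> 2" and "\<bar>n\<bar> \<ge> 1"
    by presburger+
  have "L * \<bar>fst V\<bar> = of_int \<bar>m\<bar> * a" and "L * \<bar>snd V\<bar> = of_int \<bar>n\<bar> * b"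
    using arg_cong[OF m, of abs] arg_cong[OF n, of abs] a b \<open>L > 0\<close> by (simp_all add: abs_mult)
  moreover have "2 * a \<le> of_int \<bar>m\<bar> * a" and "b \<le> of_int \<bar>n\<bar> * b"
    using \<open>\<bar>m\<bar> \<ge> 2\<close> \<open>\<bar>n\<bar> \<ge> 1\<close> a b by simp_all
  ultimately obtain s t where "s \<in> {0..<L}" "t \<in> {0..<L}" "s \<noteq> t"
    and "kb_rel a b (line P V t) (line P V s)"
    using oblique_line_self_intersects[OF a b \<open>fst V \<noteq> 0\<close> \<open>snd V \<noteq> 0\<close>, of L P] by auto
  then show False
    using g unfolding simple_closed_geodesic_def kb_pt_eq_iff[symmetric] by metis
qed

lemma simple_closed_geodesic_image:
  assumes "a > 0" and "b > 0" and "simple_closed_geodesic a b P V L"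
  shows "geodesic_image a b P V = vertical_image a b (fst P) \<or>
    geodesic_image a b P V = horizontal_image a b (snd P)"
proof -
  have "fst V \<noteq> 0 \<or> snd V \<noteq> 0"
    using assms(3) unfolding simple_closed_geodesic_def by (cases V) auto
  then show ?thesis
    using simple_closed_geodesic_axis_parallel[OF assms]
      geodesic_image_vertical geodesic_image_horizontal by metis
qed

theorem mainTheorem9:
  fixes a b L1 L2 :: real and P1 V1 P2 V2 :: "real \<times> real"
  assumes "a > 0" and "b > 0"
    and "simple_closed_geodesic a b P1 V1 L1"
    and "simple_closed_geodesic a b P2 V2 L2"
    and "geodesic_image a b P1 V1 \<noteq> geodesic_image a b P2 V2"
  shows "card (geodesic_image a b P1 V1 \<inter> geodesic_image a b P2 V2) \<noteq> 3"
proof -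
  have "card (geodesic_image a b P1 V1 \<inter> geodesic_image a b P2 V2) \<le> 2"
    using simple_closed_geodesic_image[OF assms(1,2,3)]
      simple_closed_geodesic_image[OF assms(1,2,4)]
  proof (elim disjE)
    assume "geodesic_image a b P1 V1 = vertical_image a b (fst P1)"
      and "geodesic_image a b P2 V2 = vertical_image a b (fst P2)"
    then show ?thesis
      using vertical_images_disjoint assms(5) by simp
  next
    assume "geodesic_image a b P1 V1 = horizontal_image a b (snd P1)"
      and "geodesic_image a b P2 V2 = horizontal_image a b (snd P2)"
    then show ?thesis
      using horizontal_images_disjoint assms(5) by simp
  next
    assume "geodesic_image a b P1 V1 = vertical_image a b (fst P1)"
      and "geodesic_image a b P2 V2 = horizontal_image a b (snd P2)"
    then show ?thesis
      using card_vertical_inter_horizontal by simp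
  next
    assume "geodesic_image a b P1 V1 = horizontal_image a b (snd P1)"
      and "geodesic_image a b P2 V2 = vertical_image a b (fst P2)"
    then show ?thesis
      using card_vertical_inter_horizontal by (simp add: Int_commute)
  qed
  then show ?thesis
    by linarith
qed

end
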